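(* Let $\alpha,g_0,\kappa_0,b_0,\lambda,\omega>0$, let $k>l\ge0$ be integers with $n=k-l$, and set $\mu=\lambda\omega n$, assuming $\mu>2b_0$. For $\Delta\tau>0$ put $K=\frac{2\lambda\kappa_0}{\alpha g_0\Delta\tau}$, $C=\frac{\alpha g_0\Delta\tau}{2\lambda\kappa_0}$, and for real nonzero $b\neq b'$ define $$S_{kl}(b,b')=\frac{C^2}{b_0\pi}\int_{-\infty}^{\infty}e^{-i\mu b''}\,\frac{\sin^2(b_0b'')}{b''^2}\,\frac{\sin[K(b-b'')]}{b-b''}\,\frac{\sin[K(b''-b')]}{b''-b'}\,db''.$$ Then $S_{kl}=K_1$ for $0<\Delta\tau\le\frac{4\lambda\kappa_0}{\alpha g_0(\mu+2b_0)}$, $S_{kl}=K_2$ for $\frac{4\lambda\kappa_0}{\alpha g_0(\mu+2b_0)}\le\Delta\tau\le\frac{4\kappa_0}{\alpha g_0\omega n}$, $S_{kl}=K_3$ for $\frac{4\kappa_0}{\alpha g_0\omega n}\le\Delta\tau\le\frac{4\lambda\kappa_0}{\alpha g_0(\mu-2b_0)}$, and $S_{kl}=0$ for $\Delta\tau\ge\frac{4\lambda\kappa_0}{\alpha g_0(\mu-2b_0)}$, where $K_1=\frac{iC^2}{2b_0}\Big[\frac{e^{-i\mu b'-iK(b-b')}}{b-b'}\frac{\sin^2(b_0b')}{b'^2}-\frac{e^{-i\mu b+iK(b-b')}}{b-b'}\frac{\sin^2(b_0b)}{b^2}\Big]$, $K_2=\frac{C^2}{8b_0}\Big[\frac{\tilde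 f(b')e^{-iK(b-b')}}{b-b'}-\frac{\tilde f(b)e^{iK(b-b')}}{b-b'}-\frac{\tilde\phi_+(b,b')e^{-iK(b+b')}}{bb'}\Big]$, $K_3=\frac{C^2}{8b_0}\Big[\frac{\tilde h(b)e^{iK(b-b')}}{b-b'}-\frac{\tilde h(b')e^{-iK(b-b')}}{b-b'}+\frac{\tilde\phi_-(b,b')e^{-iK(b+b')}}{bb'}\Big]$, with $\tilde f(x)=i\,e^{-i\mu x}[4\sin^2(b_0x)+e^{-2ib_0x}]/x^2$, $\tilde h(x)=i\,e^{-i(\mu-2b_0)x}/x^2$, $\tilde\phi_\pm(b,b')=\pm2b_0+\mu+i\frac{b+b'}{bb'}-2K$. In particular, if $\lambda\omega>2b_0$, all pointer states are mutually exactly orthogonal for $\Delta\tau\ge\frac{4\lambda\kappa_0}{\alpha g_0(\lambda\omega-2b_0)}$.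
   Context: This is the orthogonality function for the pointer states $\rho_k,\rho_l$ in the energy measurement of a quantum harmonic oscillator of angular frequency $\omega$ (eigenvalues $(k+\tfrac12)\hbar\omega$), with probe initial state $\frac{1}{\sqrt{\kappa_0\pi}}\frac{\sin(\kappa_0 q)}{q}$ and pointer initial state $\frac{1}{\sqrt{b_0\pi}}\frac{\sin(b_0 b)}{b}$. *)

theory Defs
  imports "HOL-Analysis.Analysis"
begin

text \<open>Parameters: mu = lam*omega*n, K = 2 lam kappa0/(alpha g0 dtau), C = 1/K.
  All functions below are stated in terms of b0, mu, K, C.\<close>

definition orth_integrand :: "real \<Rightarrow> real \<Rightarrow> real \<Rightarrow> real \<Rightarrow> real \<Rightarrow> real \<Rightarrow> complex" where
  "orth_integrand b0 mu K b b' x =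
     exp (- \<i> * complex_of_real (mu * x)) *
     complex_of_real ((sin (b0 * x))\<^sup>2 / x\<^sup>2 * (sin (K * (b - x)) / (b - x))
                      * (sin (K * (x - b')) / (x - b')))"

definition S_orth :: "real \<Rightarrow> real \<Rightarrow> real \<Rightarrow> real \<Rightarrow> real \<Rightarrow> real \<Rightarrow> complex" where
  "S_orth b0 mu K C b b' =
     complex_of_real (C\<^sup>2 / (b0 * pi)) * integral UNIV (orth_integrand b0 mu K b b')"

definition K1_orth :: "real \<Rightarrow> real \<Rightarrow> real \<Rightarrow> real \<Rightarrow> real \<Rightarrow> real \<Rightarrow> complex" where
  "K1_orth b0 mu K C b b' =
     \<i> * complex_of_real (C\<^sup>2 / (2 * b0)) *
     (exp (- \<i> * complex_of_real (mu * b') - \<i> * complex_of_real (K * (b - b'))) / complex_of_real (b - b')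
        * complex_of_real ((sin (b0 * b'))\<^sup>2 / b'\<^sup>2)
      - exp (- \<i> * complex_of_real (mu * b) + \<i> * complex_of_real (K * (b - b'))) / complex_of_real (b - b')
        * complex_of_real ((sin (b0 * b))\<^sup>2 / b\<^sup>2))"

definition f_tilde :: "real \<Rightarrow> real \<Rightarrow> real \<Rightarrow> complex" where
  "f_tilde b0 mu x = \<i> * exp (- \<i> * complex_of_real (mu * x)) *
     (complex_of_real (4 * (sin (b0 * x))\<^sup>2) + exp (- 2 * \<i> * complex_of_real (b0 * x)))
     / complex_of_real (x\<^sup>2)"

definition h_tilde :: "real \<Rightarrow> real \<Rightarrow> real \<Rightarrow> complex" where
  "h_tilde b0 mu x = \<i> * exp (- \<i> * complex_of_real ((mu - 2 * b0) * x)) / complex_of_real (x\<^sup>2)"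

definition phi_tilde :: "real \<Rightarrow> real \<Rightarrow> real \<Rightarrow> real \<Rightarrow> real \<Rightarrow> real \<Rightarrow> complex" where
  "phi_tilde s b0 mu K b b' =
     complex_of_real (s * 2 * b0 + mu) + \<i> * complex_of_real ((b + b') / (b * b'))
     - complex_of_real (2 * K)"

definition K2_orth :: "real \<Rightarrow> real \<Rightarrow> real \<Rightarrow> real \<Rightarrow> real \<Rightarrow> real \<Rightarrow> complex" where
  "K2_orth b0 mu K C b b' =
     complex_of_real (C\<^sup>2 / (8 * b0)) *
     (f_tilde b0 mu b' * exp (- \<i> * complex_of_real (K * (b - b'))) / complex_of_real (b - b')
      - f_tilde b0 mu b * exp (\<i> * complex_of_real (K * (b - b'))) / complex_of_real (b - b')
      - phi_tilde 1 b0 mu K b b' * exp (- \<i> * complex_of_real (K * (b + b'))) / complex_of_real (b * b'))"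

definition K3_orth :: "real \<Rightarrow> real \<Rightarrow> real \<Rightarrow> real \<Rightarrow> real \<Rightarrow> real \<Rightarrow> complex" where
  "K3_orth b0 mu K C b b' =
     complex_of_real (C\<^sup>2 / (8 * b0)) *
     (h_tilde b0 mu b * exp (\<i> * complex_of_real (K * (b - b'))) / complex_of_real (b - b')
      - h_tilde b0 mu b' * exp (- \<i> * complex_of_real (K * (b - b'))) / complex_of_real (b - b')
      + phi_tilde (-1) b0 mu K b b' * exp (- \<i> * complex_of_real (K * (b + b'))) / complex_of_real (b * b'))"

end

theory Submission
  imports Defs "HOL-Complex_Analysis.Complex_Analysis" "HOL-Probability.Sinc_Integral"
    "HOL-Real_Asymp.Real_Asymp"
begin

text \<open>Each factor \<open>sin (a w) / w\<close> of the integrand extends to an entire function, so the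
  integrand is the restriction of an entire \<open>\<Phi>\<close>. Expanding all sines into exponentials writes
  \<open>\<Phi> = (N\<^sub>+ + N\<^sub>-) R\<close> with \<open>R z = 1 / (z\<^sup>2 (b - z) (z - b'))\<close> and \<open>N\<^sub>\<plusminus>\<close> finite sums of
  \<open>e\<^sup>i\<^sup>\<omega>\<^sup>z\<close> with \<open>\<omega> \<ge> 0\<close> resp. \<open>\<omega> \<le> 0\<close>. After shifting the line of integration to
  \<open>Im z = 1\<close>, the part \<open>N\<^sub>+ R\<close> can be closed in the upper half plane, where it has no poles,
  and \<open>N\<^sub>- R\<close> in the lower half plane, where its residues at \<open>0, b, b'\<close> are those of
  \<open>N\<^sub>+ R\<close> with opposite sign because \<open>\<Phi>\<close> has none. So the integral is \<open>2\<pi>i\<close> times the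
  residues of \<open>N\<^sub>+ R\<close>. Which exponentials belong to \<open>N\<^sub>+\<close> is decided by the signs of
  \<open>2K - \<mu> + 2b\<^sub>0\<close>, \<open>2K - \<mu>\<close>, \<open>2K - \<mu> - 2b\<^sub>0\<close>, i.e. by \<open>\<Delta>\<tau>\<close>; this gives the four regimes,
  and in the last one \<open>N\<^sub>+ = 0\<close>.\<close>

section \<open>An entire sinc and the pole kernel\<close>

definition csinc :: "real \<Rightarrow> complex \<Rightarrow> complex" where
  "csinc a w = (if w = 0 then of_real a else sin (of_real a * w) / w)"

lemma csinc_holomorphic: "csinc a holomorphic_on UNIV"
proof (rule no_isolated_singularity'[where K = "{0}"])
  have "((\<lambda>w. sin (complex_of_real a * w)) has_field_derivative of_real a * cos (of_real a * 0)) (at 0)"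
    by (auto intro!: derivative_eq_intros)
  then have "((\<lambda>w. sin (complex_of_real a * w) / w) \<longlongrightarrow> of_real a) (at 0)"
    by (simp add: has_field_derivative_iff)
  then have "(csinc a \<longlongrightarrow> of_real a) (at 0)"
    by (rule Lim_transform_eventually) (auto simp: csinc_def eventually_at_filter)
  then show "(csinc a \<longlongrightarrow> csinc a z) (at z within UNIV)" if "z \<in> {0}" for z
    using that by (simp add: csinc_def)
  have "(\<lambda>w. sin (of_real a * w) / w) holomorphic_on UNIV - {0}"
    by (auto intro!: holomorphic_intros)
  then show "csinc a holomorphic_on UNIV - {0}"
    by (rule holomorphic_transform) (auto simp: csinc_def)
qed auto

definition pole_kernel :: "real \<Rightarrow> real \<Rightarrow> complex \<Rightarrow> complex" where
  "pole_kernel b b' z = 1 / (z^2 * (of_real b - z) * (z - of_real b'))"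

definition pole_kernel_residues :: "real \<Rightarrow> real \<Rightarrow> (complex \<Rightarrow> complex) \<Rightarrow> complex" where
  "pole_kernel_residues b b' N =
     - N (of_real b) / of_real (b^2 * (b - b')) + N (of_real b') / of_real (b'^2 * (b - b'))
     - deriv N 0 / of_real (b * b') - N 0 * of_real ((b + b') / (b * b')^2)"

lemma open_Compl_finite: "finite P \<Longrightarrow> open (- (P :: complex set))"
  by (simp add: open_Compl finite_imp_closed)

lemma residue_pole_kernel_at_b:
  assumes "N holomorphic_on UNIV" "b \<noteq> 0" "b' \<noteq> 0" "b \<noteq> b'"
  shows "residue (\<lambda>z. N z * pole_kernel b b' z) (of_real b) = - N (of_real b) / of_real (b^2 * (b - b'))"
proof -
  define g where "g w = - N w / (w^2 * (w - of_real b'))" for w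
  have "residue (\<lambda>z. N z * pole_kernel b b' z) (of_real b) = residue (\<lambda>w. g w / (w - of_real b)) (of_real b)"
  proof (rule residue_cong)
    have "\<forall>\<^sub>F w in at (complex_of_real b). w \<in> - {0, of_real b'} - {of_real b}"
      using assms by (intro eventually_at_in_open open_Compl_finite) auto
    then show "\<forall>\<^sub>F w in at (of_real b). N w * pole_kernel b b' w = g w / (w - of_real b)"
      by eventually_elim (auto simp: g_def pole_kernel_def divide_simps, simp add: algebra_simps)
  qed simp
  also have "\<dots> = g (of_real b)"
    using assms by (intro residue_simple[of "- {0, complex_of_real b'}"])
      (auto simp: g_def intro!: holomorphic_intros holomorphic_on_subset[OF assms(1)] open_Compl_finite)
  finally show ?thesis
    using assms by (simp add: g_def)
qed

lemma residue_pole_kernel_at_b':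
  assumes "N holomorphic_on UNIV" "b \<noteq> 0" "b' \<noteq> 0" "b \<noteq> b'"
  shows "residue (\<lambda>z. N z * pole_kernel b b' z) (of_real b') = N (of_real b') / of_real (b'^2 * (b - b'))"
proof -
  define g where "g w = N w / (w^2 * (of_real b - w))" for w
  have "residue (\<lambda>z. N z * pole_kernel b b' z) (of_real b') = residue (\<lambda>w. g w / (w - of_real b')) (of_real b')"
  proof (rule residue_cong)
    have "\<forall>\<^sub>F w in at (complex_of_real b'). w \<in> - {0, of_real b} - {of_real b'}"
      using assms by (intro eventually_at_in_open open_Compl_finite) auto
    then show "\<forall>\<^sub>F w in at (of_real b'). N w * pole_kernel b b' w = g w / (w - of_real b')"
      by eventually_elim (auto simp: g_def pole_kernel_def)
  qed simp
  also have "\<dots> = g (of_real b')"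
    using assms by (intro residue_simple[of "- {0, complex_of_real b}"])
      (auto simp: g_def intro!: holomorphic_intros holomorphic_on_subset[OF assms(1)] open_Compl_finite)
  finally show ?thesis
    using assms by (simp add: g_def)
qed

lemma residue_pole_kernel_at_0:
  assumes N: "N holomorphic_on UNIV" and "b \<noteq> 0" "b' \<noteq> 0" "b \<noteq> b'"
  shows "residue (\<lambda>z. N z * pole_kernel b b' z) 0
           = - deriv N 0 / of_real (b * b') - N 0 * of_real ((b + b') / (b * b')^2)"
proof -
  define g where "g w = N w / ((of_real b - w) * (w - of_real b'))" for w
  define S where "S = - {complex_of_real b, of_real b'}"
  have S: "open S" "0 \<in> S"
    using assms by (auto simp: S_def intro!: open_Compl_finite)
  have "residue (\<lambda>z. N z * pole_kernel b b' z) 0 = residue (\<lambda>w. g w / (w - 0) ^ Suc 1) 0"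
  proof (rule residue_cong)
    show "\<forall>\<^sub>F z in at 0. N z * pole_kernel b b' z = g z / (z - 0) ^ Suc 1"
      using eventually_at_in_open[OF S] assms
      by (elim eventually_mono) (auto simp: S_def g_def pole_kernel_def field_simps power2_eq_square)
  qed simp
  also have "\<dots> = deriv g 0"
  proof -
    have "g holomorphic_on S"
      unfolding g_def S_def by (auto intro!: holomorphic_intros holomorphic_on_subset[OF N])
    from residue_holomorphic_over_power[OF S this, of 1] show ?thesis
      by simp
  qed
  also have "\<dots> = - deriv N 0 / of_real (b * b') - N 0 * of_real ((b + b') / (b * b')^2)"
  proof -
    have dN: "(N has_field_derivative deriv N 0) (at 0)"
      using N by (meson UNIV_I holomorphic_derivI open_UNIV)
    have "(g has_field_derivative
           (deriv N 0 * ((of_real b - 0) * (0 - of_real b'))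
             - N 0 * ((-1) * (0 - of_real b') + (of_real b - 0) * 1))
           / ((of_real b - 0) * (0 - of_real b'))^2) (at 0)"
      unfolding g_def using assms by (auto intro!: derivative_eq_intros dN simp: power2_eq_square)
    from DERIV_imp_deriv[OF this] show ?thesis
      using assms by (simp add: field_simps power2_eq_square)
  qed
  finally show ?thesis .
qed

lemma sum_residue_pole_kernel:
  assumes "N holomorphic_on UNIV" "b \<noteq> 0" "b' \<noteq> 0" "b \<noteq> b'"
  shows "(\<Sum>p\<in>{0, of_real b, of_real b'}. residue (\<lambda>z. N z * pole_kernel b b' z) p)
           = pole_kernel_residues b b' N"
  using assms
  by (simp add: residue_pole_kernel_at_0 residue_pole_kernel_at_b residue_pole_kernel_at_b'
      pole_kernel_residues_def algebra_simps)

lemma norm_pole_kernel_le: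
  assumes "2 * (\<bar>b\<bar> + \<bar>b'\<bar> + 1) \<le> norm z"
  shows "norm (pole_kernel b b' z) \<le> 4 / norm z ^ 4"
proof -
  have z: "norm z > 0"
    using assms by (smt (verit) abs_ge_zero)
  have "norm z - \<bar>b\<bar> \<le> norm (of_real b - z)"
    by (metis norm_minus_commute norm_of_real norm_triangle_ineq2)
  then have 1: "norm z / 2 \<le> norm (of_real b - z)"
    using assms abs_ge_zero[of b'] by (smt (verit) field_sum_of_halves)
  have "norm z - \<bar>b'\<bar> \<le> norm (z - of_real b')"
    by (metis norm_of_real norm_triangle_ineq2)
  then have 2: "norm z / 2 \<le> norm (z - of_real b')"
    using assms abs_ge_zero[of b] by (smt (verit) field_sum_of_halves)
  have "norm z ^ 2 * (norm z / 2) * (norm z / 2) \<le> norm z ^ 2 * norm (of_real b - z) * norm (z - of_real b')"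
    using 1 2 z by (intro mult_mono) auto
  then have "norm z ^ 4 / 4 \<le> norm (z^2 * (of_real b - z) * (z - of_real b'))"
    by (simp only: norm_mult norm_power) (simp add: power2_eq_square power4_eq_xxxx mult_ac)
  moreover have "norm z ^ 4 / 4 > 0"
    using z by simp
  ultimately show ?thesis
    unfolding pole_kernel_def norm_divide norm_one by (simp add: divide_simps)
qed

section \<open>Contour estimates\<close>

lemma residue_neg_of_holomorphic_sum:
  assumes S: "open S" "p \<in> S" and \<Phi>: "\<Phi> holomorphic_on S"
    and f: "f holomorphic_on S - {p}" and g: "g holomorphic_on S - {p}"
    and split: "\<And>z. z \<in> S - {p} \<Longrightarrow> \<Phi> z = f z + g z"
  shows "residue g p = - residue f p"
proof -
  have "residue g p = residue (\<lambda>z. \<Phi> z - f z) p"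
  proof (rule residue_cong)
    show "\<forall>\<^sub>F z in at p. g z = \<Phi> z - f z"
      using eventually_at_in_open[OF S] by eventually_elim (simp add: split)
  qed simp
  also have "\<dots> = residue \<Phi> p - residue f p"
    using S holomorphic_on_subset[OF \<Phi>] f by (intro residue_diff) auto
  also have "residue \<Phi> p = 0"
    using residue_holo[OF S \<Phi>] .
  finally show ?thesis
    by simp
qed

lemma contour_integral_rectpath_sides:
  assumes "continuous_on (path_image (rectpath a1 a3)) f"
  defines "a2 \<equiv> Complex (Re a3) (Im a1)" and "a4 \<equiv> Complex (Re a1) (Im a3)"
  shows "contour_integral (rectpath a1 a3) f = contour_integral (linepath a1 a2) f
     + contour_integral (linepath a2 a3) f + contour_integral (linepath a3 a4) f
     + contour_integral (linepath a4 a1) f"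
proof -
  have "path_image (rectpath a1 a3)
          = closed_segment a1 a2 \<union> closed_segment a2 a3 \<union> closed_segment a3 a4 \<union> closed_segment a4 a1"
    by (simp add: rectpath_def Let_def path_image_join a2_def a4_def Un_assoc)
  then have "f contour_integrable_on linepath a1 a2" "f contour_integrable_on linepath a2 a3"
    "f contour_integrable_on linepath a3 a4" "f contour_integrable_on linepath a4 a1"
    by (auto intro!: contour_integrable_continuous_linepath continuous_on_subset[OF assms(1)])
  then show ?thesis
    by (simp add: rectpath_def Let_def a2_def a4_def contour_integrable_joinI)
qed

lemma norm_contour_integral_linepath_le:
  assumes "continuous_on (closed_segment a c) f"
    and "\<And>z. z \<in> closed_segment a c \<Longrightarrow> norm (f z) \<le> B" and "norm (c - a) \<le> L"
  shows "norm (contour_integral (linepath a c) f) \<le> B * L"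
proof -
  have B: "0 \<le> B"
    using assms(2)[of a] by (meson norm_ge_zero order_trans ends_in_segment(1))
  then have "norm (contour_integral (linepath a c) f) \<le> B * norm (c - a)"
    by (intro contour_integral_bound_linepath contour_integrable_continuous_linepath assms)
  also have "\<dots> \<le> B * L"
    using B assms(3) by (rule mult_left_mono[rotated])
  finally show ?thesis .
qed

lemma mem_closed_segment_same_Re:
  "z \<in> closed_segment (Complex x y1) (Complex x y2) \<Longrightarrow> Re z = x \<and> min y1 y2 \<le> Im z \<and> Im z \<le> max y1 y2"
  by (auto simp: closed_segment_same_Re closed_segment_eq_real_ivl split: if_splits)

lemma mem_closed_segment_same_Im:
  "z \<in> closed_segment (Complex x1 y) (Complex x2 y) \<Longrightarrow> Im z = y \<and> min x1 x2 \<le> Re z \<and> Re z \<le> max x1 x2"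
  by (auto simp: closed_segment_same_Im closed_segment_eq_real_ivl split: if_splits)

lemma norm_Complex_diff_same_Re: "norm (Complex x y1 - Complex x y2) = \<bar>y1 - y2\<bar>"
  by (simp add: cmod_def)

lemma norm_Complex_diff_same_Im: "norm (Complex x1 y - Complex x2 y) = \<bar>x1 - x2\<bar>"
  by (simp add: cmod_def)


lemma strip_shift_estimate:
  fixes \<Phi> :: "complex \<Rightarrow> complex"
  assumes \<Phi>: "\<Phi> holomorphic_on UNIV" and "R > 0"
    and bound: "\<And>z. \<bar>Re z\<bar> = R \<Longrightarrow> 0 \<le> Im z \<Longrightarrow> Im z \<le> 1 \<Longrightarrow> norm (\<Phi> z) \<le> M"
  shows "norm (integral {-R..R} (\<lambda>x. \<Phi> (of_real x))
                - contour_integral (linepath (Complex (-R) 1) (Complex R 1)) \<Phi>) \<le> 2 * M"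
proof -
  have cont: "continuous_on S \<Phi>" for S
    using \<Phi> holomorphic_on_imp_continuous_on continuous_on_subset by blast
  define right where "right = contour_integral (linepath (Complex R 0) (Complex R 1)) \<Phi>"
  define left where "left = contour_integral (linepath (Complex (-R) 1) (Complex (-R) 0)) \<Phi>"
  have "contour_integral (rectpath (Complex (-R) 0) (Complex R 1)) \<Phi> = 0"
    by (intro contour_integral_unique Cauchy_theorem_convex_simple[OF \<Phi>]) auto
  then have "contour_integral (linepath (Complex (-R) 0) (Complex R 0)) \<Phi> + right
      + contour_integral (linepath (Complex R 1) (Complex (-R) 1)) \<Phi> + left = 0"
    using contour_integral_rectpath_sides[OF cont, of "Complex (-R) 0" "Complex R 1"]
    by (simp add: right_def left_def)
  moreover have "contour_integral (linepath (Complex (-R) 0) (Complex R 0)) \<Phi>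
                   = integral {-R..R} (\<lambda>x. \<Phi> (of_real x))"
  proof -
    have "Complex (-R) 0 = of_real (-R)" "Complex R 0 = of_real R"
      by (simp_all add: complex_eq_iff)
    then show ?thesis
      using \<open>R > 0\<close> by (subst contour_integral_linepath_Reals_eq) auto
  qed
  moreover have "contour_integral (linepath (Complex R 1) (Complex (-R) 1)) \<Phi>
                   = - contour_integral (linepath (Complex (-R) 1) (Complex R 1)) \<Phi>"
    by (rule contour_integral_reverse_linepath[OF cont])
  ultimately have "integral {-R..R} (\<lambda>x. \<Phi> (of_real x))
                     - contour_integral (linepath (Complex (-R) 1) (Complex R 1)) \<Phi> = - (right + left)"
    by algebra
  moreover have "norm right \<le> M * 1"
    unfolding right_def
    by (rule norm_contour_integral_linepath_le[OF cont])
      (use \<open>R > 0\<close> in \<open>auto intro!: bound dest!: mem_closed_segment_same_Re simp: norm_Complex_diff_same_Re\<close>)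
  moreover have "norm left \<le> M * 1"
    unfolding left_def
    by (rule norm_contour_integral_linepath_le[OF cont])
      (use \<open>R > 0\<close> in \<open>auto intro!: bound dest!: mem_closed_segment_same_Re simp: norm_Complex_diff_same_Re\<close>)
  ultimately show ?thesis
    using norm_triangle_ineq[of right left] by (simp only: norm_minus_cancel)
qed

lemma upper_rectangle_estimate:
  fixes H :: "complex \<Rightarrow> complex"
  assumes H: "H holomorphic_on {z. 1 \<le> Im z}" and "R \<ge> 1"
    and bound: "\<And>z. 1 \<le> Im z \<Longrightarrow> \<bar>Re z\<bar> = R \<or> Im z = R \<Longrightarrow> norm (H z) \<le> M"
  shows "norm (contour_integral (linepath (Complex (-R) 1) (Complex R 1)) H) \<le> 6 * R * M"
proof -
  have cont: "continuous_on S H" if "S \<subseteq> {z. 1 \<le> Im z}" for S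
    using holomorphic_on_imp_continuous_on[OF H] that by (rule continuous_on_subset)
  define right where "right = contour_integral (linepath (Complex R 1) (Complex R R)) H"
  define top where "top = contour_integral (linepath (Complex R R) (Complex (-R) R)) H"
  define left where "left = contour_integral (linepath (Complex (-R) R) (Complex (-R) 1)) H"
  have img: "path_image (rectpath (Complex (-R) 1) (Complex R R)) \<subseteq> {z. 1 \<le> Im z}"
    using \<open>R \<ge> 1\<close> path_image_rectpath_subset_cbox[of "Complex (-R) 1" "Complex R R"]
    by (auto simp: in_cbox_complex_iff)
  have "contour_integral (rectpath (Complex (-R) 1) (Complex R R)) H = 0"
    by (intro contour_integral_unique Cauchy_theorem_convex_simple[OF H convex_halfspace_Im_ge] img) auto
  then have "contour_integral (linepath (Complex (-R) 1) (Complex R 1)) H + right + top + left = 0"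
    using contour_integral_rectpath_sides[OF cont[OF img]] by (simp add: right_def top_def left_def)
  then have "contour_integral (linepath (Complex (-R) 1) (Complex R 1)) H = - (right + top + left)"
    by algebra
  then have "norm (contour_integral (linepath (Complex (-R) 1) (Complex R 1)) H) = norm (right + top + left)"
    by (simp only: norm_minus_cancel)
  moreover have "norm right \<le> M * (2 * R)" "norm top \<le> M * (2 * R)" "norm left \<le> M * (2 * R)"
    unfolding right_def top_def left_def using \<open>R \<ge> 1\<close>
    by (auto intro!: norm_contour_integral_linepath_le cont bound dest!: mem_closed_segment_same_Re mem_closed_segment_same_Im
        simp: norm_Complex_diff_same_Re norm_Complex_diff_same_Im)
  ultimately have "norm (contour_integral (linepath (Complex (-R) 1) (Complex R 1)) H) \<le> 3 * (M * (2 * R))"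
    using norm_triangle_ineq[of "right + top" left] norm_triangle_ineq[of right top] by linarith
  then show ?thesis
    by (simp add: mult_ac)
qed

lemma lower_rectangle_residue_estimate:
  fixes H :: "complex \<Rightarrow> complex"
  assumes P: "finite P" "P \<subseteq> box (Complex (-R) (-R)) (Complex R 1)"
    and H: "H holomorphic_on - P" and "R \<ge> 1"
    and bound: "\<And>z. Im z \<le> 1 \<Longrightarrow> \<bar>Re z\<bar> = R \<or> Im z = -R \<Longrightarrow> norm (H z) \<le> M"
  shows "norm (contour_integral (linepath (Complex (-R) 1) (Complex R 1)) H
                + 2 * pi * \<i> * (\<Sum>p\<in>P. residue H p)) \<le> 6 * R * M"
proof -
  define \<gamma> where "\<gamma> = rectpath (Complex (-R) (-R)) (Complex R 1)"
  have cont: "continuous_on S H" if "S \<subseteq> - P" for S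
    using holomorphic_on_imp_continuous_on[OF H] that by (rule continuous_on_subset)
  have off_P: "S \<subseteq> - P" if "\<And>z. z \<in> S \<Longrightarrow> \<bar>Re z\<bar> = R \<or> Im z = -R \<or> Im z = 1" for S
    using that P(2) by (fastforce simp: in_box_complex_iff)
  have img: "path_image \<gamma> \<subseteq> - P"
    using P(2) \<open>R \<ge> 1\<close> path_image_rectpath_cbox_minus_box[of "Complex (-R) (-R)" "Complex R 1"]
    by (auto simp: \<gamma>_def)
  define bottom where "bottom = contour_integral (linepath (Complex (-R) (-R)) (Complex R (-R))) H"
  define right where "right = contour_integral (linepath (Complex R (-R)) (Complex R 1)) H"
  define left where "left = contour_integral (linepath (Complex (-R) 1) (Complex (-R) (-R))) H"
  have "contour_integral \<gamma> H = 2 * pi * \<i> * (\<Sum>p\<in>P. winding_number \<gamma> p * residue H p)"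
    using img P(1) H by (intro Residue_theorem) (auto simp: \<gamma>_def Compl_eq_Diff_UNIV)
  also have "(\<Sum>p\<in>P. winding_number \<gamma> p * residue H p) = (\<Sum>p\<in>P. residue H p)"
    using P(2) by (intro sum.cong) (auto simp: \<gamma>_def winding_number_rectpath)
  finally have "bottom + right + contour_integral (linepath (Complex R 1) (Complex (-R) 1)) H + left
                  = 2 * pi * \<i> * (\<Sum>p\<in>P. residue H p)"
    using contour_integral_rectpath_sides[OF cont[OF img[unfolded \<gamma>_def]]]
    by (simp add: \<gamma>_def bottom_def right_def left_def)
  moreover have "contour_integral (linepath (Complex R 1) (Complex (-R) 1)) H
                   = - contour_integral (linepath (Complex (-R) 1) (Complex R 1)) H"
    by (intro contour_integral_reverse_linepath cont off_P) (auto dest!: mem_closed_segment_same_Re mem_closed_segment_same_Im)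
  ultimately have "contour_integral (linepath (Complex (-R) 1) (Complex R 1)) H
                     + 2 * pi * \<i> * (\<Sum>p\<in>P. residue H p) = bottom + right + left"
    by algebra
  moreover have "norm bottom \<le> M * (2 * R)" "norm right \<le> M * (2 * R)" "norm left \<le> M * (2 * R)"
    unfolding bottom_def right_def left_def using \<open>R \<ge> 1\<close>
    by (auto intro!: norm_contour_integral_linepath_le cont off_P bound dest!: mem_closed_segment_same_Re mem_closed_segment_same_Im
        simp: norm_Complex_diff_same_Re norm_Complex_diff_same_Im)
  ultimately have "norm (contour_integral (linepath (Complex (-R) 1) (Complex R 1)) H
                       + 2 * pi * \<i> * (\<Sum>p\<in>P. residue H p)) \<le> 3 * (M * (2 * R))"
    using norm_triangle_ineq[of "bottom + right" left] norm_triangle_ineq[of bottom right] by simp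
  then show ?thesis
    by (simp add: mult_ac)
qed


lemma norm_pole_kernel_le_on_square:
  assumes "2 * (\<bar>b\<bar> + \<bar>b'\<bar> + 1) \<le> R" and "\<bar>Re z\<bar> = R \<or> \<bar>Im z\<bar> = R"
  shows "norm (pole_kernel b b' z) \<le> 4 / R^4"
proof -
  have "R \<le> norm z"
    using assms(2) abs_Re_le_cmod[of z] abs_Im_le_cmod[of z] by linarith
  then have "norm (pole_kernel b b' z) \<le> 4 / norm z ^ 4"
    using assms(1) by (intro norm_pole_kernel_le) linarith
  also have "\<dots> \<le> 4 / R^4"
    using \<open>R \<le> norm z\<close> assms(1) by (intro divide_left_mono power_mono) (auto intro!: mult_pos_pos)
  finally show ?thesis .
qed

lemma norm_mult_pole_kernel_le:
  assumes "norm w \<le> A" "2 * (\<bar>b\<bar> + \<bar>b'\<bar> + 1) \<le> R" "\<bar>Re z\<bar> = R \<or> \<bar>Im z\<bar> = R"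
  shows "norm (w * pole_kernel b b' z) \<le> 4 * A / R^4"
  using mult_mono[OF assms(1) norm_pole_kernel_le_on_square[OF assms(2,3)]] order_trans[OF norm_ge_zero assms(1)]
  by (simp add: norm_mult mult.commute)

lemma sum_residue_complementary_part:
  assumes b: "b \<noteq> 0" "b' \<noteq> 0" "b \<noteq> b'" and N: "N holomorphic_on UNIV" and \<Phi>: "\<Phi> holomorphic_on UNIV"
    and H: "H holomorphic_on - {0, of_real b, of_real b'}"
    and \<Phi>_eq: "\<And>z. z \<notin> {0, of_real b, of_real b'} \<Longrightarrow> \<Phi> z = N z * pole_kernel b b' z + H z"
  shows "(\<Sum>p\<in>{0, of_real b, of_real b'}. residue H p) = - pole_kernel_residues b b' N"
proof -
  define P where "P = {0, complex_of_real b, of_real b'}"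
  have "residue H p = - residue (\<lambda>z. N z * pole_kernel b b' z) p" if "p \<in> P" for p
  proof (rule residue_neg_of_holomorphic_sum[OF _ _ \<Phi>[THEN holomorphic_on_subset]])
    show "open (- (P - {p}))" "p \<in> - (P - {p})"
      by (auto simp: P_def simp del: Compl_Diff_eq intro!: open_Compl_finite)
    show "(\<lambda>z. N z * pole_kernel b b' z) holomorphic_on - (P - {p}) - {p}"
      unfolding P_def pole_kernel_def by (auto intro!: holomorphic_intros holomorphic_on_subset[OF N])
  qed (use that in \<open>auto intro: holomorphic_on_subset[OF H] \<Phi>_eq simp: P_def\<close>)
  then have "(\<Sum>p\<in>P. residue H p) = - (\<Sum>p\<in>P. residue (\<lambda>z. N z * pole_kernel b b' z) p)"
    by (simp add: sum_negf)
  then show ?thesis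
    unfolding P_def sum_residue_pole_kernel[OF N b] .
qed

section \<open>From symmetric limits to the integral over the real line\<close>

lemma integrable_divide_1_plus_square: "(\<lambda>x::real. c / (1 + x^2)) integrable_on UNIV"
proof -
  have "einterval (-\<infinity>) \<infinity> = (UNIV :: real set)"
    by (auto simp: einterval_def)
  then have "(\<lambda>x::real. inverse (1 + x^2)) integrable_on UNIV"
    using set_borel_integral_eq_integral(1)[OF integrable_inverse_1_plus_square] by simp
  from integrable_on_cmult_left[OF this, of c] show ?thesis
    by (simp add: divide_inverse)
qed

lemma bound_divide_1_plus_square:
  fixes g :: "real \<Rightarrow> 'a::real_normed_vector"
  assumes g: "continuous_on UNIV g" and "1 \<le> \<rho>"
    and decay: "\<And>x. \<rho> \<le> \<bar>x\<bar> \<Longrightarrow> norm (g x) \<le> D / x^2"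
  obtains C where "\<And>x. norm (g x) \<le> C / (1 + x^2)"
proof -
  obtain M where M: "0 < M" "\<And>x. x \<in> {-\<rho>..\<rho>} \<Longrightarrow> norm (g x) \<le> M"
  proof -
    have "bounded (g ` {-\<rho>..\<rho>})"
      by (intro compact_imp_bounded compact_continuous_image continuous_on_subset[OF g]) auto
    then show ?thesis
      using that by (auto simp: bounded_pos)
  qed
  have "0 \<le> D / \<rho>^2"
    using decay[of \<rho>] \<open>1 \<le> \<rho>\<close> norm_ge_zero[of "g \<rho>"] by linarith
  then have D: "0 \<le> D"
    using \<open>1 \<le> \<rho>\<close> by (auto simp: zero_le_divide_iff)
  have "norm (g x) \<le> (M * (1 + \<rho>^2) + 2 * D) / (1 + x^2)" for x
  proof -
    have pos: "0 < 1 + x^2"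
      by (simp add: add_pos_nonneg)
    have "0 \<le> M * (1 + \<rho>^2) / (1 + x^2)" "0 \<le> 2 * D / (1 + x^2)"
      using M(1) D pos by simp_all
    moreover consider "\<bar>x\<bar> \<le> \<rho>" | "\<rho> \<le> \<bar>x\<bar>"
      by linarith
    then have "norm (g x) \<le> M * (1 + \<rho>^2) / (1 + x^2) \<or> norm (g x) \<le> 2 * D / (1 + x^2)"
    proof cases
      case 1
      then have "x^2 \<le> \<rho>^2"
        using abs_le_square_iff[of x \<rho>] \<open>1 \<le> \<rho>\<close> by simp
      then have "M * (1 + x^2) \<le> M * (1 + \<rho>^2)"
        using M(1) by (intro mult_left_mono) auto
      then have "M \<le> M * (1 + \<rho>^2) / (1 + x^2)"
        using pos by (simp add: field_simps)
      moreover have "norm (g x) \<le> M"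
        using M(2)[of x] 1 by (simp add: abs_le_iff)
      ultimately show ?thesis
        by linarith
    next
      case 2
      then have "1 \<le> x^2"
        using abs_le_square_iff[of 1 x] \<open>1 \<le> \<rho>\<close> by simp
      then have "0 < x^2" "1 + x^2 \<le> 2 * x^2"
        by linarith+
      then have "2 * D / (2 * x^2) \<le> 2 * D / (1 + x^2)"
        using D pos by (intro divide_left_mono) (simp_all add: mult_pos_pos)
      then show ?thesis
        using decay[OF 2] by simp
    qed
    ultimately show ?thesis
      unfolding add_divide_distrib by linarith
  qed
  then show thesis
    by (rule that)
qed

lemma has_integral_UNIV_symmetric_limit:
  fixes g :: "real \<Rightarrow> 'a::euclidean_space"
  assumes g: "continuous_on UNIV g" and bound: "\<And>x. norm (g x) \<le> C / (1 + x^2)"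
    and lim: "((\<lambda>R. integral {-R..R} g) \<longlongrightarrow> L) at_top"
  shows "(g has_integral L) UNIV"
proof -
  define f where "f k x = (if x \<in> {- real k..real k} then g x else 0)" for k :: nat and x
  have f_int: "f k integrable_on UNIV" for k
    unfolding f_def integrable_restrict_UNIV
    by (intro integrable_continuous_interval continuous_on_subset[OF g]) auto
  have f_bound: "norm (f k x) \<le> C / (1 + x^2)" for k x
    using bound[of x] order_trans[OF norm_ge_zero bound[of x]] by (auto simp: f_def)
  have f_lim: "(\<lambda>k. f k x) \<longlonglongrightarrow> g x" for x
  proof (rule tendsto_eventually)
    obtain n :: nat where "\<bar>x\<bar> \<le> real n"
      using real_arch_simple by blast
    then show "\<forall>\<^sub>F k in sequentially. f k x = g x"
      unfolding eventually_sequentially f_def by (intro exI[of _ n]) auto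
  qed
  note dominated = dominated_convergence[OF f_int integrable_divide_1_plus_square f_bound f_lim]
  have "(\<lambda>k. integral {- real k..real k} g) \<longlonglongrightarrow> integral UNIV g"
    using dominated(2) unfolding f_def integral_restrict_UNIV .
  moreover have "(\<lambda>k. integral {- real k..real k} g) \<longlonglongrightarrow> L"
    using filterlim_compose[OF lim filterlim_real_sequentially] by (simp add: o_def)
  ultimately have "integral UNIV g = L"
    by (rule LIMSEQ_unique)
  then show ?thesis
    using integrable_integral[OF dominated(1)] by simp
qed

locale kernel_split =
  fixes b b' A :: real and Nu Nd \<Phi> :: "complex \<Rightarrow> complex"
  assumes b: "b \<noteq> 0" "b' \<noteq> 0" "b \<noteq> b'"
    and Nu: "Nu holomorphic_on UNIV" and Nd: "Nd holomorphic_on UNIV"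
    and Nu_bound: "\<And>z. 0 \<le> Im z \<Longrightarrow> norm (Nu z) \<le> A"
    and Nd_bound: "\<And>z. Im z \<le> 1 \<Longrightarrow> norm (Nd z) \<le> A"
    and \<Phi>: "\<Phi> holomorphic_on UNIV"
    and \<Phi>_eq: "\<And>z. z \<notin> {0, of_real b, of_real b'} \<Longrightarrow> \<Phi> z = (Nu z + Nd z) * pole_kernel b b' z"
begin

lemma A_nonneg: "0 \<le> A"
  using Nu_bound[of 0] norm_ge_zero[of "Nu 0"] by (simp del: norm_ge_zero)

lemma norm_\<Phi>_le:
  assumes "z \<notin> {0, of_real b, of_real b'}" "0 \<le> Im z" "Im z \<le> 1"
  shows "norm (\<Phi> z) \<le> 2 * A * norm (pole_kernel b b' z)"
proof -
  have "norm (\<Phi> z) \<le> (norm (Nu z) + norm (Nd z)) * norm (pole_kernel b b' z)"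
    using assms(1) by (simp add: \<Phi>_eq norm_mult mult_right_mono norm_triangle_ineq)
  also have "\<dots> \<le> 2 * A * norm (pole_kernel b b' z)"
    using Nu_bound[OF assms(2)] Nd_bound[OF assms(3)] by (intro mult_right_mono) auto
  finally show ?thesis .
qed

lemma shifted_line_estimate:
  assumes R: "2 * (\<bar>b\<bar> + \<bar>b'\<bar> + 1) \<le> R"
  shows "norm (contour_integral (linepath (Complex (-R) 1) (Complex R 1)) \<Phi>
                - 2 * pi * \<i> * pole_kernel_residues b b' Nu) \<le> 48 * A / R^3"
proof -
  define P where "P = {0, complex_of_real b, of_real b'}"
  define Hu where "Hu z = Nu z * pole_kernel b b' z" for z
  define Hd where "Hd z = Nd z * pole_kernel b b' z" for z
  define T where "T f = contour_integral (linepath (Complex (-R) 1) (Complex R 1)) f" for f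
  have "\<bar>b\<bar> < R" "\<bar>b'\<bar> < R" "1 \<le> R"
    using R by auto
  then have P_box: "P \<subseteq> box (Complex (-R) (-R)) (Complex R 1)"
    by (auto simp: P_def in_box_complex_iff)
  have Hu_holo: "Hu holomorphic_on - P" and Hd_holo: "Hd holomorphic_on - P"
    unfolding Hu_def Hd_def P_def pole_kernel_def
    by (auto intro!: holomorphic_intros holomorphic_on_subset[OF Nu] holomorphic_on_subset[OF Nd])
  have upper: "norm (T Hu) \<le> 6 * R * (4 * A / R^4)"
    unfolding T_def
  proof (rule upper_rectangle_estimate[OF holomorphic_on_subset[OF Hu_holo]])
    show "norm (Hu z) \<le> 4 * A / R^4" if "1 \<le> Im z" "\<bar>Re z\<bar> = R \<or> Im z = R" for z
      unfolding Hu_def using that \<open>1 \<le> R\<close> by (intro norm_mult_pole_kernel_le[OF Nu_bound R]) auto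
  qed (use \<open>1 \<le> R\<close> in \<open>auto simp: P_def\<close>)
  have lower: "norm (T Hd + 2 * pi * \<i> * (\<Sum>p\<in>P. residue Hd p)) \<le> 6 * R * (4 * A / R^4)"
    unfolding T_def
  proof (rule lower_rectangle_residue_estimate[OF _ P_box Hd_holo])
    show "norm (Hd z) \<le> 4 * A / R^4" if "Im z \<le> 1" "\<bar>Re z\<bar> = R \<or> Im z = -R" for z
      unfolding Hd_def using that \<open>1 \<le> R\<close> by (intro norm_mult_pole_kernel_le[OF Nd_bound R]) auto
  qed (use \<open>1 \<le> R\<close> in \<open>auto simp: P_def\<close>)
  have split: "\<Phi> z = Hu z + Hd z" if "z \<notin> P" for z
    using \<Phi>_eq[of z] that by (simp add: P_def Hu_def Hd_def algebra_simps)
  have "T \<Phi> = T Hu + T Hd"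
  proof -
    have top: "closed_segment (Complex (-R) 1) (Complex R 1) \<subseteq> - P"
      by (auto dest!: mem_closed_segment_same_Im simp: P_def)
    then have "T \<Phi> = contour_integral (linepath (Complex (-R) 1) (Complex R 1)) (\<lambda>z. Hu z + Hd z)"
      unfolding T_def by (intro contour_integral_eq) (auto simp: split)
    also have "\<dots> = T Hu + T Hd"
      unfolding T_def using top
      by (intro contour_integral_add contour_integrable_continuous_linepath
          continuous_on_subset[OF holomorphic_on_imp_continuous_on[OF Hu_holo]]
          continuous_on_subset[OF holomorphic_on_imp_continuous_on[OF Hd_holo]])
    finally show ?thesis .
  qed
  moreover have "(\<Sum>p\<in>P. residue Hd p) = - pole_kernel_residues b b' Nu"
    unfolding P_def using Hd_holo split
    by (intro sum_residue_complementary_part[OF b Nu \<Phi>]) (auto simp: P_def Hu_def)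
  ultimately have decomp: "T \<Phi> - 2 * pi * \<i> * pole_kernel_residues b b' Nu
                     = T Hu + (T Hd + 2 * pi * \<i> * (\<Sum>p\<in>P. residue Hd p))"
    by (simp add: algebra_simps)
  have "6 * R * (4 * A / R^4) = 24 * A / R^3" "48 * A / R^3 = 24 * A / R^3 + 24 * A / R^3"
    using \<open>1 \<le> R\<close> by (simp_all add: power_eq_if)
  then have "norm (T \<Phi> - 2 * pi * \<i> * pole_kernel_residues b b' Nu) \<le> 48 * A / R^3"
    unfolding decomp
    using upper lower norm_triangle_ineq[of "T Hu" "T Hd + 2 * pi * \<i> * (\<Sum>p\<in>P. residue Hd p)"]
    by linarith
  then show ?thesis
    by (simp add: T_def)
qed

lemma integral_estimate:
  assumes R: "2 * (\<bar>b\<bar> + \<bar>b'\<bar> + 1) \<le> R"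
  shows "norm (integral {-R..R} (\<lambda>x. \<Phi> (of_real x)) - 2 * pi * \<i> * pole_kernel_residues b b' Nu)
           \<le> 16 * A / R^4 + 48 * A / R^3"
proof -
  have "1 \<le> R"
    using R by simp
  have "norm (integral {-R..R} (\<lambda>x. \<Phi> (of_real x))
          - contour_integral (linepath (Complex (-R) 1) (Complex R 1)) \<Phi>) \<le> 2 * (8 * A / R^4)"
  proof (rule strip_shift_estimate[OF \<Phi>])
    fix z assume z: "\<bar>Re z\<bar> = R" "0 \<le> Im z" "Im z \<le> 1"
    moreover have "z \<notin> {0, of_real b, of_real b'}"
      using z R by auto
    ultimately show "norm (\<Phi> z) \<le> 8 * A / R^4"
      using norm_\<Phi>_le[of z] norm_pole_kernel_le_on_square[OF R, of z] A_nonneg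
        mult_left_mono[of "norm (pole_kernel b b' z)" "4 / R^4" "2 * A"] by simp
  qed (use \<open>1 \<le> R\<close> in simp)
  then show ?thesis
    using shifted_line_estimate[OF R] norm_triangle_ineq[of
        "integral {-R..R} (\<lambda>x. \<Phi> (of_real x)) - contour_integral (linepath (Complex (-R) 1) (Complex R 1)) \<Phi>"
        "contour_integral (linepath (Complex (-R) 1) (Complex R 1)) \<Phi> - 2 * pi * \<i> * pole_kernel_residues b b' Nu"]
    by simp
qed

lemma decay:
  assumes "2 * (\<bar>b\<bar> + \<bar>b'\<bar> + 1) \<le> \<bar>x\<bar>"
  shows "norm (\<Phi> (of_real x)) \<le> 8 * A / x^2"
proof -
  have "1 \<le> \<bar>x\<bar>"
    using assms by simp
  have "norm (\<Phi> (of_real x)) \<le> 2 * A * norm (pole_kernel b b' (of_real x))"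
    using assms by (intro norm_\<Phi>_le) auto
  also have "\<dots> \<le> 2 * A * (4 / \<bar>x\<bar>^4)"
    using norm_pole_kernel_le[of b b' "of_real x"] assms A_nonneg by (intro mult_left_mono) auto
  also have "\<dots> \<le> 8 * A / x^2"
  proof -
    have "x^2 * 1 \<le> x^2 * x^2"
      using \<open>1 \<le> \<bar>x\<bar>\<close> abs_le_square_iff[of 1 x] by (intro mult_left_mono) auto
    then have "x^2 \<le> \<bar>x\<bar>^4"
      by (simp add: power_even_abs flip: power_add)
    moreover have "0 < x^2"
      using \<open>1 \<le> \<bar>x\<bar>\<close> by auto
    ultimately show ?thesis
      using A_nonneg by (simp add: divide_left_mono mult.assoc)
  qed
  finally show ?thesis .
qed

lemma has_integral:
  "((\<lambda>x. \<Phi> (of_real x)) has_integral 2 * pi * \<i> * pole_kernel_residues b b' Nu) UNIV"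
proof -
  define \<rho> where "\<rho> = 2 * (\<bar>b\<bar> + \<bar>b'\<bar> + 1)"
  have cont: "continuous_on UNIV (\<lambda>x. \<Phi> (of_real x))"
    by (intro continuous_on_compose2[OF holomorphic_on_imp_continuous_on[OF \<Phi>]] continuous_intros) auto
  obtain C where C: "\<And>x. norm (\<Phi> (of_real x)) \<le> C / (1 + x^2)"
    using bound_divide_1_plus_square[OF cont _ decay, of \<rho>] by (auto simp: \<rho>_def)
  have "((\<lambda>R. integral {-R..R} (\<lambda>x. \<Phi> (of_real x)) - 2 * pi * \<i> * pole_kernel_residues b b' Nu)
          \<longlongrightarrow> 0) at_top"
  proof (rule Lim_null_comparison)
    show "\<forall>\<^sub>F R in at_top. norm (integral {-R..R} (\<lambda>x. \<Phi> (of_real x))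
            - 2 * pi * \<i> * pole_kernel_residues b b' Nu) \<le> 16 * A / R^4 + 48 * A / R^3"
      using eventually_ge_at_top[of \<rho>] by eventually_elim (rule integral_estimate, simp add: \<rho>_def)
    show "((\<lambda>R. 16 * A / R^4 + 48 * A / R^3) \<longlongrightarrow> 0) at_top"
      by real_asymp
  qed
  then show ?thesis
    by (intro has_integral_UNIV_symmetric_limit[OF cont C]) (simp add: LIM_zero_iff)
qed

end


section \<open>Finite exponential sums\<close>

definition exp_sum :: "(complex \<times> real) list \<Rightarrow> complex \<Rightarrow> complex" where
  "exp_sum xs z = (\<Sum>p\<leftarrow>xs. fst p * exp (\<i> * of_real (snd p) * z))"

lemma exp_sum_Nil [simp]: "exp_sum [] z = 0"
  and exp_sum_Cons [simp]: "exp_sum (p # xs) z = fst p * exp (\<i> * of_real (snd p) * z) + exp_sum xs z"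
  and exp_sum_append [simp]: "exp_sum (xs @ ys) z = exp_sum xs z + exp_sum ys z"
  by (simp_all add: exp_sum_def)

lemma exp_sum_holomorphic: "exp_sum xs holomorphic_on S"
  by (induction xs) (auto intro!: holomorphic_intros simp: exp_sum_def[abs_def])

lemma deriv_exp_sum_0: "deriv (exp_sum xs) 0 = (\<Sum>p\<leftarrow>xs. fst p * (\<i> * of_real (snd p)))"
proof -
  have "(exp_sum xs has_field_derivative (\<Sum>p\<leftarrow>xs. fst p * (\<i> * of_real (snd p)))) (at 0)"
  proof (induction xs)
    case (Cons p xs)
    have "((\<lambda>z. fst p * exp (\<i> * of_real (snd p) * z) + exp_sum xs z) has_field_derivative
            fst p * (\<i> * of_real (snd p)) + (\<Sum>p\<leftarrow>xs. fst p * (\<i> * of_real (snd p)))) (at 0)"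
      by (rule DERIV_add[OF _ Cons.IH]) (auto intro!: derivative_eq_intros)
    then show ?case
      by (simp add: exp_sum_Cons[abs_def])
  qed (simp add: exp_sum_def[abs_def])
  then show ?thesis
    by (rule DERIV_imp_deriv)
qed

lemma norm_exp_sum_upper_le:
  assumes "\<forall>p\<in>set xs. 0 \<le> snd p" "0 \<le> Im z"
  shows "norm (exp_sum xs z) \<le> (\<Sum>p\<leftarrow>xs. norm (fst p))"
  using assms(1)
proof (induction xs)
  case (Cons p xs)
  have "norm (exp (\<i> * of_real (snd p) * z)) \<le> 1"
    using Cons.prems assms(2) by (simp add: norm_exp_eq_Re mult_nonneg_nonneg)
  then have "norm (fst p * exp (\<i> * of_real (snd p) * z)) \<le> norm (fst p)"
    unfolding norm_mult by (simp add: mult_left_le)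
  then show ?case
    using Cons norm_triangle_ineq[of "fst p * exp (\<i> * of_real (snd p) * z)" "exp_sum xs z"] by simp
qed simp

lemma norm_exp_sum_lower_le:
  assumes "\<forall>p\<in>set xs. snd p \<le> 0" "Im z \<le> 1"
  shows "norm (exp_sum xs z) \<le> (\<Sum>p\<leftarrow>xs. norm (fst p) * exp (- snd p))"
  using assms(1)
proof (induction xs)
  case (Cons p xs)
  have "norm (exp (\<i> * of_real (snd p) * z)) \<le> exp (- snd p)"
    using Cons.prems assms(2) mult_right_mono_neg[of "Im z" 1 "snd p"]
    by (simp add: norm_exp_eq_Re mult.commute)
  then have "norm (fst p * exp (\<i> * of_real (snd p) * z)) \<le> norm (fst p) * exp (- snd p)"
    unfolding norm_mult by (simp add: mult_left_mono)
  then show ?case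
    using Cons norm_triangle_ineq[of "fst p * exp (\<i> * of_real (snd p) * z)" "exp_sum xs z"] by simp
qed simp

lemma exp_sum_kernel_has_integral:
  fixes b b' :: real and \<Phi> :: "complex \<Rightarrow> complex"
  assumes b: "b \<noteq> 0" "b' \<noteq> 0" "b \<noteq> b'"
    and up: "\<forall>p\<in>set xu. 0 \<le> snd p" and down: "\<forall>p\<in>set xd. snd p \<le> 0"
    and \<Phi>: "\<Phi> holomorphic_on UNIV"
    and \<Phi>_eq: "\<And>z. z \<notin> {0, of_real b, of_real b'} \<Longrightarrow> \<Phi> z = (exp_sum xu z + exp_sum xd z) * pole_kernel b b' z"
  shows "((\<lambda>x. \<Phi> (of_real x)) has_integral 2 * pi * \<i> * pole_kernel_residues b b' (exp_sum xu)) UNIV"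
proof -
  define A where "A = (\<Sum>p\<leftarrow>xu. norm (fst p)) + (\<Sum>p\<leftarrow>xd. norm (fst p) * exp (- snd p))"
  have "0 \<le> (\<Sum>p\<leftarrow>xu. norm (fst p))" "0 \<le> (\<Sum>p\<leftarrow>xd. norm (fst p) * exp (- snd p))"
    by (auto intro!: sum_list_nonneg)
  interpret kernel_split b b' A "exp_sum xu" "exp_sum xd" \<Phi>
  proof unfold_locales
    show "norm (exp_sum xu z) \<le> A" if "0 \<le> Im z" for z
      using norm_exp_sum_upper_le[OF up that] \<open>0 \<le> (\<Sum>p\<leftarrow>xd. _)\<close> unfolding A_def by linarith
    show "norm (exp_sum xd z) \<le> A" if "Im z \<le> 1" for z
      using norm_exp_sum_lower_le[OF down that] \<open>0 \<le> (\<Sum>p\<leftarrow>xu. _)\<close> unfolding A_def by linarith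
  qed (fact b \<Phi> exp_sum_holomorphic \<Phi>_eq)+
  show ?thesis
    by (rule has_integral)
qed

section \<open>The orthogonality function\<close>

definition sin_sq_terms :: "real \<Rightarrow> complex \<Rightarrow> real \<Rightarrow> (complex \<times> real) list" where
  "sin_sq_terms b0 c \<omega> = [(- c / 4, \<omega> + 2 * b0), (c / 2, \<omega>), (- c / 4, \<omega> - 2 * b0)]"

lemma sin_sq_exp:
  "sin (of_real b0 * z) ^ 2 = 1/2 - exp (\<i> * of_real (2 * b0) * z) / 4 - exp (\<i> * of_real (- (2 * b0)) * z) / 4"
proof -
  define e where "e = exp (\<i> * (of_real b0 * z))"
  have e: "e \<noteq> 0"
    by (simp add: e_def)
  have 1: "exp (- (\<i> * (of_real b0 * z))) = 1 / e"
    by (simp add: e_def exp_minus field_simps)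
  have 2: "exp (\<i> * of_real (2 * b0) * z) = e * e"
    by (simp add: e_def exp_add[symmetric] algebra_simps)
  have 3: "exp (\<i> * of_real (- (2 * b0)) * z) = 1 / (e * e)"
    by (simp add: e_def exp_add[symmetric] exp_minus[symmetric] algebra_simps field_simps)
  show ?thesis
    unfolding sin_exp_eq 1 2 3 e_def[symmetric] using e by (simp add: field_simps power2_eq_square)
qed

lemma exp_sum_sin_sq_terms:
  "exp_sum (sin_sq_terms b0 c \<omega>) z = c * exp (\<i> * of_real \<omega> * z) * sin (of_real b0 * z) ^ 2"
proof -
  have "exp (\<i> * of_real (\<omega> + d) * z) = exp (\<i> * of_real \<omega> * z) * exp (\<i> * of_real d * z)" for d
    by (simp add: exp_add[symmetric] algebra_simps)
  from this[of "2 * b0"] this[of "- (2 * b0)"] show ?thesis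
    unfolding sin_sq_terms_def sin_sq_exp by (simp add: algebra_simps)
qed

lemma sin_mult_sin_exp:
  "sin (of_real K * (of_real b - z)) * sin (of_real K * (z - of_real b'))
     = exp (- \<i> * of_real (K * (b + b'))) / 4 * exp (\<i> * of_real (2 * K) * z)
       + exp (\<i> * of_real (K * (b + b'))) / 4 * exp (\<i> * of_real (- (2 * K)) * z)
       - of_real (cos (K * (b - b'))) / 2"
proof -
  define P where "P = exp (\<i> * of_real (K * b))"
  define Q where "Q = exp (\<i> * of_real (K * b'))"
  define V where "V = exp (\<i> * of_real K * z)"
  have nz: "P \<noteq> 0" "Q \<noteq> 0" "V \<noteq> 0"
    by (simp_all add: P_def Q_def V_def)
  have a1: "exp (\<i> * (of_real K * (of_real b - z))) = P / V"
    by (simp add: P_def V_def exp_diff[symmetric] algebra_simps)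
  have a2: "exp (- (\<i> * (of_real K * (of_real b - z)))) = V / P"
    by (simp add: P_def V_def exp_diff[symmetric] algebra_simps)
  have a3: "exp (\<i> * (of_real K * (z - of_real b'))) = V / Q"
    by (simp add: Q_def V_def exp_diff[symmetric] algebra_simps)
  have a4: "exp (- (\<i> * (of_real K * (z - of_real b')))) = Q / V"
    by (simp add: Q_def V_def exp_diff[symmetric] algebra_simps)
  have a5: "exp (- \<i> * of_real (K * (b + b'))) = 1 / (P * Q)"
    by (simp add: P_def Q_def exp_add[symmetric] exp_minus[symmetric] algebra_simps field_simps)
  have a6: "exp (\<i> * of_real (K * (b + b'))) = P * Q"
    by (simp add: P_def Q_def exp_add[symmetric] algebra_simps)
  have a7: "exp (\<i> * of_real (2 * K) * z) = V * V"
    by (simp add: V_def exp_add[symmetric] algebra_simps)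
  have a8: "exp (\<i> * of_real (- (2 * K)) * z) = 1 / (V * V)"
    by (simp add: V_def exp_add[symmetric] exp_minus[symmetric] algebra_simps field_simps)
  have a9: "of_real (cos (K * (b - b'))) = (P / Q + Q / P) / 2"
  proof -
    have "of_real (cos (K * (b - b'))) = cos (complex_of_real (K * (b - b')))"
      by (simp only: cos_of_real)
    also have "\<dots> = (exp (\<i> * of_real (K * (b - b'))) + exp (- (\<i> * of_real (K * (b - b'))))) / 2"
      by (rule cos_exp_eq)
    also have "exp (\<i> * of_real (K * (b - b'))) = P / Q"
      by (simp add: P_def Q_def exp_diff[symmetric] algebra_simps)
    also have "exp (- (\<i> * of_real (K * (b - b')))) = Q / P"
      by (simp add: P_def Q_def exp_diff[symmetric] algebra_simps)
    finally show ?thesis .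
  qed
  show ?thesis
    unfolding sin_exp_eq a1 a2 a3 a4 a5 a6 a7 a8 a9 using nz by (simp add: field_simps)
qed

definition orth_numerator :: "real \<Rightarrow> real \<Rightarrow> real \<Rightarrow> real \<Rightarrow> real \<Rightarrow> complex \<Rightarrow> complex" where
  "orth_numerator b0 mu K b b' z = exp (- \<i> * of_real mu * z) * sin (of_real b0 * z) ^ 2
      * sin (of_real K * (of_real b - z)) * sin (of_real K * (z - of_real b'))"

text \<open>The two sine factors contribute \<open>e\<^sup>2\<^sup>i\<^sup>K\<^sup>z\<close>, \<open>e\<^sup>-\<^sup>2\<^sup>i\<^sup>K\<^sup>z\<close> and a constant; only the first
  group can have nonnegative frequencies, the others are collected in \<open>other_terms\<close>.\<close>

definition plus_coeff :: "real \<Rightarrow> real \<Rightarrow> real \<Rightarrow> complex" where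
  "plus_coeff K b b' = exp (- \<i> * of_real (K * (b + b'))) / 4"

definition other_terms :: "real \<Rightarrow> real \<Rightarrow> real \<Rightarrow> real \<Rightarrow> real \<Rightarrow> (complex \<times> real) list" where
  "other_terms b0 mu K b b' =
     sin_sq_terms b0 (exp (\<i> * of_real (K * (b + b'))) / 4) (- (2 * K) - mu)
     @ sin_sq_terms b0 (- of_real (cos (K * (b - b'))) / 2) (- mu)"

lemma orth_numerator_eq_exp_sum:
  "orth_numerator b0 mu K b b' z
     = exp_sum (sin_sq_terms b0 (plus_coeff K b b') (2 * K - mu)) z + exp_sum (other_terms b0 mu K b b') z"
proof -
  define E where "E = exp (- \<i> * of_real mu * z)"
  have shift: "exp (\<i> * of_real (a - mu) * z) = exp (\<i> * of_real a * z) * E" for a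
    by (simp add: E_def exp_add[symmetric] algebra_simps)
  have unshift: "exp (\<i> * of_real (- mu) * z) = E"
    by (simp add: E_def)
  have "orth_numerator b0 mu K b b' z
      = E * (sin (of_real b0 * z) ^ 2 * (sin (of_real K * (of_real b - z)) * sin (of_real K * (z - of_real b'))))"
    by (simp only: orth_numerator_def E_def mult.assoc)
  also have "\<dots> = E * (sin (of_real b0 * z) ^ 2 *
      (exp (- \<i> * of_real (K * (b + b'))) / 4 * exp (\<i> * of_real (2 * K) * z)
       + exp (\<i> * of_real (K * (b + b'))) / 4 * exp (\<i> * of_real (- (2 * K)) * z)
       - of_real (cos (K * (b - b'))) / 2))"
    by (simp only: sin_mult_sin_exp)
  finally show ?thesis
    unfolding other_terms_def exp_sum_append exp_sum_sin_sq_terms plus_coeff_def shift unshift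
    by (simp add: algebra_simps)
qed

lemma other_terms_nonpos:
  assumes "0 < b0" "0 < K" "2 * b0 < mu"
  shows "\<forall>p\<in>set (other_terms b0 mu K b b'). snd p \<le> 0"
  using assms by (auto simp: other_terms_def sin_sq_terms_def)

lemma orth_integrand_eq_csinc:
  assumes "x \<notin> {0, b, b'}"
  shows "orth_integrand b0 mu K b b' x
           = exp (- \<i> * of_real mu * of_real x) * csinc b0 (of_real x) ^ 2
             * csinc K (of_real b - of_real x) * csinc K (of_real x - of_real b')"
  using assms unfolding orth_integrand_def csinc_def
  by (simp add: sin_of_real[symmetric] power2_eq_square field_simps)

lemma S_orth_eq_residues:
  fixes b b' :: real
  assumes b: "b \<noteq> 0" "b' \<noteq> 0" "b \<noteq> b'"
    and up: "\<forall>p\<in>set xu. 0 \<le> snd p" and down: "\<forall>p\<in>set xd. snd p \<le> 0"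
    and split: "\<And>z. exp_sum xu z + exp_sum xd z = orth_numerator b0 mu K b b' z"
  shows "orth_integrand b0 mu K b b' integrable_on UNIV"
    and "S_orth b0 mu K C b b' = of_real (C^2 / (b0 * pi)) * (2 * pi * \<i> * pole_kernel_residues b b' (exp_sum xu))"
proof -
  define \<Phi> where "\<Phi> z = exp (- \<i> * of_real mu * z) * csinc b0 z ^ 2
      * csinc K (of_real b - z) * csinc K (z - of_real b')" for z
  have \<Phi>: "\<Phi> holomorphic_on UNIV"
  proof -
    have csinc_comp: "(\<lambda>z. csinc a (f z)) holomorphic_on UNIV" if "f holomorphic_on UNIV" for a f
      using holomorphic_on_compose[OF that csinc_holomorphic[THEN holomorphic_on_subset]]
      by (simp add: o_def)
    show ?thesis
      unfolding \<Phi>_def[abs_def] by (intro holomorphic_intros csinc_comp csinc_holomorphic)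
  qed
  have "\<Phi> z = (exp_sum xu z + exp_sum xd z) * pole_kernel b b' z" if "z \<notin> {0, of_real b, of_real b'}" for z
  proof -
    have "z \<noteq> 0" "of_real b - z \<noteq> 0" "z - of_real b' \<noteq> 0"
      using that by auto
    then show ?thesis
      unfolding split \<Phi>_def orth_numerator_def pole_kernel_def csinc_def
      by (simp add: field_simps power2_eq_square)
  qed
  from exp_sum_kernel_has_integral[OF b up down \<Phi> this]
  have "(orth_integrand b0 mu K b b' has_integral 2 * pi * \<i> * pole_kernel_residues b b' (exp_sum xu)) UNIV"
    by (rule has_integral_spike_finite[where S = "{0, b, b'}", rotated 2])
      (auto simp: \<Phi>_def orth_integrand_eq_csinc)
  then show "orth_integrand b0 mu K b b' integrable_on UNIV"
    and "S_orth b0 mu K C b b' = of_real (C^2 / (b0 * pi)) * (2 * pi * \<i> * pole_kernel_residues b b' (exp_sum xu))"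
    by (auto simp: S_orth_def integral_unique)
qed


lemma exp_sum_filter_partition:
  "exp_sum (filter P xs) z + exp_sum (filter (\<lambda>p. \<not> P p) xs) z = exp_sum xs z"
  by (induction xs) (simp_all add: algebra_simps)

lemma orth_integrand_integrable:
  assumes "b \<noteq> 0" "b' \<noteq> 0" "b \<noteq> b'"
  shows "orth_integrand b0 mu K b b' integrable_on UNIV"
proof -
  define xs where "xs = sin_sq_terms b0 (plus_coeff K b b') (2 * K - mu) @ other_terms b0 mu K b b'"
  have "exp_sum xs z = orth_numerator b0 mu K b b' z" for z
    by (simp add: xs_def orth_numerator_eq_exp_sum)
  then show ?thesis
    by (intro S_orth_eq_residues(1)[OF assms, of "filter (\<lambda>p. 0 \<le> snd p) xs"
          "filter (\<lambda>p. \<not> 0 \<le> snd p) xs"]) (simp_all add: exp_sum_filter_partition)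
qed

text \<open>The terms of \<open>sin_sq_terms\<close> are listed by decreasing frequency, so in each regime
  the terms with nonnegative frequency form an initial segment of length \<open>n\<close>.\<close>

lemma S_orth_eq_residues_take:
  assumes b: "b \<noteq> 0" "b' \<noteq> 0" "b \<noteq> b'" and pos: "0 < b0" "0 < K" "2 * b0 < mu"
    and up: "\<forall>p\<in>set (take n (sin_sq_terms b0 (plus_coeff K b b') (2 * K - mu))). 0 \<le> snd p"
    and down: "\<forall>p\<in>set (drop n (sin_sq_terms b0 (plus_coeff K b b') (2 * K - mu))). snd p \<le> 0"
  shows "S_orth b0 mu K C b b' = of_real (C^2 / (b0 * pi)) * (2 * pi * \<i> *
           pole_kernel_residues b b' (exp_sum (take n (sin_sq_terms b0 (plus_coeff K b b') (2 * K - mu)))))"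
proof (rule S_orth_eq_residues(2)[OF b up])
  show "\<forall>p\<in>set (drop n (sin_sq_terms b0 (plus_coeff K b b') (2 * K - mu)) @ other_terms b0 mu K b b').
          snd p \<le> 0"
    using down other_terms_nonpos[OF pos] by auto
  show "exp_sum (take n (sin_sq_terms b0 (plus_coeff K b b') (2 * K - mu))) z
      + exp_sum (drop n (sin_sq_terms b0 (plus_coeff K b b') (2 * K - mu)) @ other_terms b0 mu K b b') z
      = orth_numerator b0 mu K b b' z" for z
    by (simp only: orth_numerator_eq_exp_sum add.assoc[symmetric] flip: exp_sum_append)
      (simp only: append_assoc[symmetric] append_take_drop_id)
qed

text \<open>After these rewrites every residue identity below is an identity between rational
  functions of \<open>cis (K b)\<close>, \<open>cis (K b')\<close>, \<open>cis (\<mu> b)\<close>, \<open>cis (b\<^sub>0 b)\<close>, \<dots>\<close>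

lemma exp_i_eq_cis:
  "exp (\<i> * of_real a * of_real c) = cis (a * c)"
  "exp (\<i> * of_real a) = cis a"
  "exp (- \<i> * of_real a) = cis (- a)"
  "exp (- (\<i> * of_real a)) = cis (- a)"
  "exp (- 2 * \<i> * of_real a) = cis (- (2 * a))"
  "exp (- \<i> * of_real a - \<i> * of_real c) = cis (- a - c)"
  "exp (- \<i> * of_real a + \<i> * of_real c) = cis (- a + c)"
  by (simp_all add: cis_conv_exp algebra_simps)

lemma cis_split:
  "cis (a + c) = cis a * cis c"
  "cis (a - c) = cis a / cis c"
  "cis (- a) = inverse (cis a)"
  "cis ((p + q) * x) = cis (p * x) * cis (q * x)"
  "cis ((p - q) * x) = cis (p * x) / cis (q * x)"
  "cis ((- p) * x) = inverse (cis (p * x))"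
  "cis ((2 * p) * x) = cis (p * x) ^ 2"
  "cis (0 * x) = 1"
  "cis (p * (x - y)) = cis (p * x) / cis (p * y)"
  "cis (p * (x + y)) = cis (p * x) * cis (p * y)"
  "cis (2 * a) = cis a ^ 2"
  by (simp_all add: cis_mult cis_divide power2_eq_square algebra_simps)

lemma of_real_sin_cis: "of_real (sin t) = (cis t - cis (- t)) / (2 * \<i>)"
  by (simp add: sin_of_real[symmetric] sin_exp_eq cis_conv_exp)

lemmas residue_algebra_unfold = pole_kernel_residues_def deriv_exp_sum_0 sin_sq_terms_def plus_coeff_def
  exp_sum_Cons exp_sum_Nil fst_conv snd_conv list.map sum_list.Cons sum_list.Nil take_Suc_Cons take_0
  numeral_nat

lemma S_orth_eq_K1:
  assumes b: "b \<noteq> 0" "b' \<noteq> 0" "b \<noteq> b'" and pos: "0 < b0" "0 < K" "2 * b0 < mu"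
    and regime: "mu + 2 * b0 \<le> 2 * K"
  shows "S_orth b0 mu K C b b' = K1_orth b0 mu K C b b'"
proof -
  have "S_orth b0 mu K C b b' = of_real (C^2 / (b0 * pi)) * (2 * pi * \<i> *
          pole_kernel_residues b b' (exp_sum (take 3 (sin_sq_terms b0 (plus_coeff K b b') (2 * K - mu)))))"
    using regime pos by (intro S_orth_eq_residues_take[OF b pos]) (auto simp: sin_sq_terms_def)
  also have "\<dots> = K1_orth b0 mu K C b b'"
    unfolding K1_orth_def residue_algebra_unfold
    using b pos
    apply (simp only: exp_i_eq_cis mult_zero_right)
    apply (simp only: of_real_mult of_real_divide of_real_power of_real_sin_cis cis_split)
    apply (simp add: divide_simps power2_eq_square del: of_real_diff cis_inverse)
    apply (rule disjI2)
    apply (simp add: algebra_simps)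
    done
  finally show ?thesis .
qed

lemma S_orth_eq_K2:
  assumes b: "b \<noteq> 0" "b' \<noteq> 0" "b \<noteq> b'" and pos: "0 < b0" "0 < K" "2 * b0 < mu"
    and regime: "mu \<le> 2 * K" "2 * K \<le> mu + 2 * b0"
  shows "S_orth b0 mu K C b b' = K2_orth b0 mu K C b b'"
proof -
  have "S_orth b0 mu K C b b' = of_real (C^2 / (b0 * pi)) * (2 * pi * \<i> *
          pole_kernel_residues b b' (exp_sum (take 2 (sin_sq_terms b0 (plus_coeff K b b') (2 * K - mu)))))"
    using regime pos by (intro S_orth_eq_residues_take[OF b pos]) (auto simp: sin_sq_terms_def)
  also have "\<dots> = K2_orth b0 mu K C b b'"
    unfolding K2_orth_def f_tilde_def phi_tilde_def residue_algebra_unfold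
    using b pos
    apply (simp only: exp_i_eq_cis mult_zero_right)
    apply (simp only: of_real_mult of_real_divide of_real_power of_real_sin_cis cis_split)
    apply (simp add: divide_simps power2_eq_square del: of_real_diff cis_inverse)
    apply (rule disjI2)
    apply (simp add: algebra_simps)
    done
  finally show ?thesis .
qed

lemma S_orth_eq_K3:
  assumes b: "b \<noteq> 0" "b' \<noteq> 0" "b \<noteq> b'" and pos: "0 < b0" "0 < K" "2 * b0 < mu"
    and regime: "mu - 2 * b0 \<le> 2 * K" "2 * K \<le> mu"
  shows "S_orth b0 mu K C b b' = K3_orth b0 mu K C b b'"
proof -
  have "S_orth b0 mu K C b b' = of_real (C^2 / (b0 * pi)) * (2 * pi * \<i> *
          pole_kernel_residues b b' (exp_sum (take 1 (sin_sq_terms b0 (plus_coeff K b b') (2 * K - mu)))))"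
    using regime pos by (intro S_orth_eq_residues_take[OF b pos]) (auto simp: sin_sq_terms_def)
  also have "\<dots> = K3_orth b0 mu K C b b'"
    unfolding K3_orth_def h_tilde_def phi_tilde_def residue_algebra_unfold
    using b pos
    apply (simp only: exp_i_eq_cis mult_zero_right)
    apply (simp only: of_real_mult of_real_divide of_real_power of_real_sin_cis cis_split)
    apply (simp add: divide_simps power2_eq_square del: of_real_diff cis_inverse)
    apply (rule disjI2)
    apply (simp add: algebra_simps)
    done
  finally show ?thesis .
qed

lemma S_orth_eq_0:
  assumes b: "b \<noteq> 0" "b' \<noteq> 0" "b \<noteq> b'" and pos: "0 < b0" "0 < K" "2 * b0 < mu"
    and regime: "2 * K \<le> mu - 2 * b0"
  shows "S_orth b0 mu K C b b' = 0"
proof -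
  have "S_orth b0 mu K C b b' = of_real (C^2 / (b0 * pi)) * (2 * pi * \<i> *
          pole_kernel_residues b b' (exp_sum (take 0 (sin_sq_terms b0 (plus_coeff K b b') (2 * K - mu)))))"
    using regime pos by (intro S_orth_eq_residues_take[OF b pos]) (auto simp: sin_sq_terms_def)
  then show ?thesis
    by (simp add: pole_kernel_residues_def deriv_exp_sum_0)
qed


text \<open>With \<open>P = 4 \<lambda> \<kappa>\<^sub>0 / (\<alpha> g\<^sub>0)\<close> the parameters of the theorem are \<open>K = P / (2 \<Delta>\<tau>)\<close>, and its
  thresholds on \<open>\<Delta>\<tau>\<close> are \<open>P / (\<mu> + 2 b\<^sub>0)\<close>, \<open>P / \<mu>\<close> and \<open>P / (\<mu> - 2 b\<^sub>0)\<close>.\<close>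

lemma S_orth_regimes:
  fixes b b' b0 mu P \<Delta>\<tau> C :: real
  assumes b: "b \<noteq> 0" "b' \<noteq> 0" "b \<noteq> b'" and pos: "0 < b0" "2 * b0 < mu" "0 < P" "0 < \<Delta>\<tau>"
  defines "K \<equiv> P / (2 * \<Delta>\<tau>)"
  shows "(\<Delta>\<tau> \<le> P / (mu + 2 * b0) \<longrightarrow> S_orth b0 mu K C b b' = K1_orth b0 mu K C b b')
       \<and> (P / (mu + 2 * b0) \<le> \<Delta>\<tau> \<and> \<Delta>\<tau> \<le> P / mu \<longrightarrow> S_orth b0 mu K C b b' = K2_orth b0 mu K C b b')
       \<and> (P / mu \<le> \<Delta>\<tau> \<and> \<Delta>\<tau> \<le> P / (mu - 2 * b0) \<longrightarrow> S_orth b0 mu K C b b' = K3_orth b0 mu K C b b')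
       \<and> (P / (mu - 2 * b0) \<le> \<Delta>\<tau> \<longrightarrow> S_orth b0 mu K C b b' = 0)"
proof -
  have K: "0 < K" "2 * K = P / \<Delta>\<tau>"
    using pos by (simp_all add: K_def)
  have swap: "\<Delta>\<tau> \<le> P / D \<longleftrightarrow> D \<le> 2 * K" "P / D \<le> \<Delta>\<tau> \<longleftrightarrow> 2 * K \<le> D" if "0 < D" for D
    unfolding K(2) using that pos by (simp_all add: pos_le_divide_eq pos_divide_le_eq mult.commute)
  have "0 < mu - 2 * b0" "0 < mu" "0 < mu + 2 * b0"
    using pos by simp_all
  then show ?thesis
    using S_orth_eq_K1[OF b pos(1) K(1) pos(2)] S_orth_eq_K2[OF b pos(1) K(1) pos(2)]
      S_orth_eq_K3[OF b pos(1) K(1) pos(2)] S_orth_eq_0[OF b pos(1) K(1) pos(2)]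
    by (simp add: swap)
qed

lemma S_orth_eq_0_of_large_time:
  fixes b b' b0 \<nu> P \<Delta>\<tau> C :: real
  assumes b: "b \<noteq> 0" "b' \<noteq> 0" "b \<noteq> b'" and pos: "0 < b0" "2 * b0 < \<nu>" "0 < P"
    and "l < k" and \<Delta>\<tau>: "P / (\<nu> - 2 * b0) \<le> \<Delta>\<tau>"
  shows "S_orth b0 (\<nu> * (real k - real l)) (P / (2 * \<Delta>\<tau>)) C b b' = 0"
proof -
  have "\<nu> * 1 \<le> \<nu> * (real k - real l)"
    using \<open>l < k\<close> pos by (intro mult_left_mono) auto
  then have mu: "2 * b0 < \<nu> * (real k - real l)"
    using pos by linarith
  then have "P / (\<nu> * (real k - real l) - 2 * b0) \<le> P / (\<nu> - 2 * b0)"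
    using \<open>\<nu> * 1 \<le> _\<close> pos by (intro divide_left_mono mult_pos_pos) (use mu in auto)
  moreover have "0 < P / (\<nu> - 2 * b0)"
    using pos by simp
  ultimately have "0 < \<Delta>\<tau>" "P / (\<nu> * (real k - real l) - 2 * b0) \<le> \<Delta>\<tau>"
    using \<Delta>\<tau> by linarith+
  then show ?thesis
    using S_orth_regimes[OF b pos(1) mu pos(3)] by blast
qed

theorem mainTheorem7:
  fixes \<alpha> g0 \<kappa>0 b0 lam \<omega> :: real
  assumes "\<alpha> > 0" "g0 > 0" "\<kappa>0 > 0" "b0 > 0" "lam > 0" "\<omega> > 0"
  shows "\<forall>(k::nat) (l::nat) \<Delta>\<tau> b b'.
           (let n = real k - real l; \<mu> = lam * \<omega> * n;
                K = 2 * lam * \<kappa>0 / (\<alpha> * g0 * \<Delta>\<tau>);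
                C = \<alpha> * g0 * \<Delta>\<tau> / (2 * lam * \<kappa>0)
            in (l < k \<and> \<mu> > 2 * b0 \<and> \<Delta>\<tau> > 0 \<and> b \<noteq> 0 \<and> b' \<noteq> 0 \<and> b \<noteq> b') \<longrightarrow>
               orth_integrand b0 \<mu> K b b' integrable_on UNIV
             \<and> (\<Delta>\<tau> \<le> 4 * lam * \<kappa>0 / (\<alpha> * g0 * (\<mu> + 2 * b0)) \<longrightarrow>
                  S_orth b0 \<mu> K C b b' = K1_orth b0 \<mu> K C b b')
             \<and> (4 * lam * \<kappa>0 / (\<alpha> * g0 * (\<mu> + 2 * b0)) \<le> \<Delta>\<tau> \<and>
                \<Delta>\<tau> \<le> 4 * \<kappa>0 / (\<alpha> * g0 * \<omega> * n) \<longrightarrow>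
                  S_orth b0 \<mu> K C b b' = K2_orth b0 \<mu> K C b b')
             \<and> (4 * \<kappa>0 / (\<alpha> * g0 * \<omega> * n) \<le> \<Delta>\<tau> \<and>
                \<Delta>\<tau> \<le> 4 * lam * \<kappa>0 / (\<alpha> * g0 * (\<mu> - 2 * b0)) \<longrightarrow>
                  S_orth b0 \<mu> K C b b' = K3_orth b0 \<mu> K C b b')
             \<and> (\<Delta>\<tau> \<ge> 4 * lam * \<kappa>0 / (\<alpha> * g0 * (\<mu> - 2 * b0)) \<longrightarrow>
                  S_orth b0 \<mu> K C b b' = 0))
       \<and> (lam * \<omega> > 2 * b0 \<longrightarrow>
           (\<forall>(k::nat) (l::nat) \<Delta>\<tau> b b'.
              l < k \<and> b \<noteq> 0 \<and> b' \<noteq> 0 \<and> b \<noteq> b' \<and>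
              \<Delta>\<tau> \<ge> 4 * lam * \<kappa>0 / (\<alpha> * g0 * (lam * \<omega> - 2 * b0)) \<longrightarrow>
              S_orth b0 (lam * \<omega> * (real k - real l)) (2 * lam * \<kappa>0 / (\<alpha> * g0 * \<Delta>\<tau>))
                     (\<alpha> * g0 * \<Delta>\<tau> / (2 * lam * \<kappa>0)) b b' = 0))"
proof -
  define P where "P = 4 * lam * \<kappa>0 / (\<alpha> * g0)"
  have P: "0 < P"
    using assms by (simp add: P_def)
  have K_eq: "2 * lam * \<kappa>0 / (\<alpha> * g0 * \<Delta>\<tau>) = P / (2 * \<Delta>\<tau>)" for \<Delta>\<tau>
    by (simp add: P_def mult_ac)
  have threshold: "4 * lam * \<kappa>0 / (\<alpha> * g0 * D) = P / D" for D
    by (simp add: P_def)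
  have threshold_mid: "4 * \<kappa>0 / (\<alpha> * g0 * \<omega> * n) = P / (lam * \<omega> * n)" for n
    using assms by (cases "n = 0") (simp_all add: P_def field_simps)
  show ?thesis
    unfolding Let_def K_eq threshold threshold_mid
    using orth_integrand_integrable S_orth_regimes[OF _ _ _ \<open>b0 > 0\<close> _ P]
      S_orth_eq_0_of_large_time[OF _ _ _ \<open>b0 > 0\<close> _ P] by blast
qed

end
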